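(* Let $\Gamma\Rightarrow\Delta$ be a sequent. (1) If $\mathsf{G}^c(\mathbf{K}_D)\vdash\Gamma\Rightarrow\Delta$ then $\Gamma\Rightarrow\Delta$ is valid in the class $\mathbb{M}$ of all models. (2) If $\mathsf{G}^c(\mathbf{KD}_D)\vdash\Gamma\Rightarrow\Delta$ then $\Gamma\Rightarrow\Delta$ is valid in $\mathbb{M}_{\mathbf{ser}}$. (3) If $\mathsf{G}^c(\mathbf{KT}_D)\vdash\Gamma\Rightarrow\Delta$ then $\Gamma\Rightarrow\Delta$ is valid in $\mathbb{M}_{\mathbf{ref}}$.
   Context: Language: fix a finite nonempty set $\mathsf{Agt}$ of agents and a countable set $\mathsf{Prop}$ of propositional variables; $\mathsf{Grp}$ is the set of nonempty subsets of $\mathsf{Agt}$. Formulas: $\alpha::=p\mid\bot\mid\alpha\wedge\alpha\mid\alpha\vee\alpha\mid\alpha\rightarrow\alpha\mid\neg\alpha\mid D_G\alpha$ ($p\in\mathsf{Prop}$, $G\in\mathsf{Grp}$). Outmost-boxed formula: one of the form $D_G\gamma$. Semantics: a model $M=(W,(R_G)_{G\in\mathsf{Grp}},V)$ has a set $W$ of states, binary relations $R_G\subseteq W\times W$ with $R_H\subseteq R_G$ whenever $G\subseteq H$, and $V:\mathsf{Prop}\to\mathcal P(W)$. Truth is classical for connectives and $M,w\models D_G\alpha$ iff $M,v\models\alpha$ for all $v$ with $(w,v)\in R_G$. $\mathbb{M}$ is the class of all models; $\mathbb{M}_{\mathbf{ser}}$ the class of models where $R_{\{a\}}$ is serial for every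 $a\in\mathsf{Agt}$; $\mathbb{M}_{\mathbf{ref}}$ the class where every $R_G$ is reflexive. A sequent $\Gamma\Rightarrow\Delta$ is valid in a class of models if $\bigwedge\Gamma\rightarrow\bigvee\Delta$ is true at every state of every model of the class (empty conjunction is $\top$, empty disjunction is $\bot$). Sequent calculi (sequents $\Gamma\Rightarrow\Delta$ are pairs of finite multisets; derivable = root of a finite tree built from initial sequents by rules): $\mathsf{G}(\mathbf{K}_D)$ has initial sequents $\Gamma,p\Rightarrow p,\Delta$ and $\bot,\Gamma\Rightarrow\Delta$; rules $(R\wedge)$ from $\Gamma\Rightarrow\Delta,\alpha_1$ and $\Gamma\Rightarrow\Delta,\alpha_2$ infer $\Gamma\Rightarrow\Delta,\alpha_1\wedge\alpha_2$; $(L\wedge)$ from $\alpha_1,\alpha_2,\Gamma\Rightarrow\Delta$ infer $\alpha_1\wedge\alpha_2,\Gamma\Rightarrow\Delta$; $(R\vee)$ from $\Gamma\Rightarrow\Delta,\alpha_1,\alpha_2$ infer $\Gamma\Rightarrow\Delta,\alpha_1\vee\alpha_2$; $(L\vee)$ from $\alpha_1,\Gamma\Rightarrow\Delta$ and $\alpha_2,\Gamma\Rightarrow\Delta$ infer $\alpha_1\vee\alpha_2,\Gamma\Rightarrow\Delta$; $(R\rightarrow)$ from $\alpha_1,\Gamma\Rightarrow\Delta,\alpha_2$ infer $\Gamma\Rightarrow\Delta,\alpha_1\rightarrow\alpha_2$; $(L\rightarrow)$ from $\Gamma\Rightarrow\Delta,\alpha_1$ and $\alpha_2,\Gamma\Rightarrow\Delta$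 infer $\alpha_1\rightarrow\alpha_2,\Gamma\Rightarrow\Delta$; $(R\neg)$ from $\alpha,\Gamma\Rightarrow\Delta$ infer $\Gamma\Rightarrow\Delta,\neg\alpha$; $(L\neg)$ from $\Gamma\Rightarrow\Delta,\alpha$ infer $\neg\alpha,\Gamma\Rightarrow\Delta$; $(D_K)$: from $\alpha_1,\dots,\alpha_n\Rightarrow\beta$ ($n\ge0$) infer $\Sigma,D_{G_1}\alpha_1,\dots,D_{G_n}\alpha_n\Rightarrow D_G\beta,\Omega$ where all $G_i\subseteq G$, $\Sigma$ consists only of propositional variables, $\bot$, and $D_H\gamma$ with $H\not\subseteq G$, and $\Omega$ only of propositional variables, $\bot$, outmost-boxed formulas. $\mathsf{G}(\mathbf{KD}_D)$ adds $(D_D)$: from $\Gamma\Rightarrow$ with $\Gamma\neq\emptyset$ infer $\Sigma,D_{\{a\}}\Gamma\Rightarrow\Omega$, $\Sigma$ only propositional variables, $\bot$, $D_H\gamma$ with $H\neq\{a\}$; $\Omega$ only propositional variables, $\bot$, outmost-boxed formulas. $\mathsf{G}(\mathbf{KT}_D)$ adds to $\mathsf{G}(\mathbf{K}_D)$ $(D_T)$: from $D_G\alpha,\alpha,\Gamma\Rightarrow\Delta$ infer $D_G\alpha,\Gamma\Rightarrow\Delta$. $\mathsf{G}^c(\mathbf{L})$ is $\mathsf{G}(\mathbf{L})$ plus the cut rule: from $\Gamma\Rightarrow\Delta,C$ and $C,\Gamma'\Rightarrow\Delta'$ infer $\Gamma,\Gamma'\Rightarrow\Delta,\Delta'$. 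*)

theory Defs
  imports Main "HOL-Library.Multiset" "HOL-Library.Countable"
begin

(* Agents: a finite (nonempty, as every HOL type) type 'ag.
   Propositional variables: a countable type 'p.
   Groups: nonempty subsets of 'ag, enforced via well-formedness. *)

datatype ('ag, 'p) fm =
    Atom 'p
  | Bot
  | And "('ag, 'p) fm" "('ag, 'p) fm"
  | Or  "('ag, 'p) fm" "('ag, 'p) fm"
  | Imp "('ag, 'p) fm" "('ag, 'p) fm"
  | Neg "('ag, 'p) fm"
  | Dbox "'ag set" "('ag, 'p) fm"

fun wf :: "('ag, 'p) fm \<Rightarrow> bool" where
  "wf (Atom p) = True"
| "wf Bot = True"
| "wf (And a b) = (wf a \<and> wf b)"
| "wf (Or a b) = (wf a \<and> wf b)"
| "wf (Imp a b) = (wf a \<and> wf b)"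
| "wf (Neg a) = wf a"
| "wf (Dbox G a) = (G \<noteq> {} \<and> wf a)"

definition wf_seq :: "('ag, 'p) fm multiset \<Rightarrow> ('ag, 'p) fm multiset \<Rightarrow> bool" where
  "wf_seq \<Gamma> \<Delta> = (\<forall>\<phi> \<in># \<Gamma> + \<Delta>. wf \<phi>)"

fun is_boxed :: "('ag, 'p) fm \<Rightarrow> bool" where
  "is_boxed (Dbox G a) = True"
| "is_boxed _ = False"

fun is_atom_or_bot :: "('ag, 'p) fm \<Rightarrow> bool" where
  "is_atom_or_bot (Atom p) = True"
| "is_atom_or_bot Bot = True"
| "is_atom_or_bot _ = False"

definition sigmaK :: "'ag set \<Rightarrow> ('ag, 'p) fm \<Rightarrow> bool" where
  "sigmaK G \<phi> = (is_atom_or_bot \<phi> \<or> (\<exists>H \<gamma>. \<phi> = Dbox H \<gamma> \<and> \<not> H \<subseteq> G))"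

definition sigmaD :: "'ag \<Rightarrow> ('ag, 'p) fm \<Rightarrow> bool" where
  "sigmaD a \<phi> = (is_atom_or_bot \<phi> \<or> (\<exists>H \<gamma>. \<phi> = Dbox H \<gamma> \<and> H \<noteq> {a}))"

definition omega_ok :: "('ag, 'p) fm \<Rightarrow> bool" where
  "omega_ok \<phi> = (is_atom_or_bot \<phi> \<or> is_boxed \<phi>)"

datatype logic = LK | LKD | LKT

inductive derivc :: "logic \<Rightarrow> ('ag::finite, 'p::countable) fm multiset \<Rightarrow> ('ag, 'p) fm multiset \<Rightarrow> bool"
  for L :: logic where
  init_atom: "wf_seq (add_mset (Atom p) \<Gamma>) (add_mset (Atom p) \<Delta>) \<Longrightarrow>
     derivc L (add_mset (Atom p) \<Gamma>) (add_mset (Atom p) \<Delta>)"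
| init_bot: "wf_seq (add_mset Bot \<Gamma>) \<Delta> \<Longrightarrow> derivc L (add_mset Bot \<Gamma>) \<Delta>"
| R_and: "derivc L \<Gamma> (add_mset a1 \<Delta>) \<Longrightarrow> derivc L \<Gamma> (add_mset a2 \<Delta>) \<Longrightarrow>
     derivc L \<Gamma> (add_mset (And a1 a2) \<Delta>)"
| L_and: "derivc L (add_mset a1 (add_mset a2 \<Gamma>)) \<Delta> \<Longrightarrow> derivc L (add_mset (And a1 a2) \<Gamma>) \<Delta>"
| R_or: "derivc L \<Gamma> (add_mset a1 (add_mset a2 \<Delta>)) \<Longrightarrow> derivc L \<Gamma> (add_mset (Or a1 a2) \<Delta>)"
| L_or: "derivc L (add_mset a1 \<Gamma>) \<Delta> \<Longrightarrow> derivc L (add_mset a2 \<Gamma>) \<Delta> \<Longrightarrow>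
     derivc L (add_mset (Or a1 a2) \<Gamma>) \<Delta>"
| R_imp: "derivc L (add_mset a1 \<Gamma>) (add_mset a2 \<Delta>) \<Longrightarrow> derivc L \<Gamma> (add_mset (Imp a1 a2) \<Delta>)"
| L_imp: "derivc L \<Gamma> (add_mset a1 \<Delta>) \<Longrightarrow> derivc L (add_mset a2 \<Gamma>) \<Delta> \<Longrightarrow>
     derivc L (add_mset (Imp a1 a2) \<Gamma>) \<Delta>"
| R_neg: "derivc L (add_mset a \<Gamma>) \<Delta> \<Longrightarrow> derivc L \<Gamma> (add_mset (Neg a) \<Delta>)"
| L_neg: "derivc L \<Gamma> (add_mset a \<Delta>) \<Longrightarrow> derivc L (add_mset (Neg a) \<Gamma>) \<Delta>"
| D_K: "derivc L (mset (map snd ps)) {#\<beta>#} \<Longrightarrow>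
     (\<forall>(H, a) \<in> set ps. H \<subseteq> G) \<Longrightarrow>
     (\<forall>\<phi> \<in># \<Sigma>. sigmaK G \<phi>) \<Longrightarrow> (\<forall>\<phi> \<in># \<Omega>. omega_ok \<phi>) \<Longrightarrow>
     wf_seq (\<Sigma> + mset (map (\<lambda>(H, a). Dbox H a) ps)) (add_mset (Dbox G \<beta>) \<Omega>) \<Longrightarrow>
     derivc L (\<Sigma> + mset (map (\<lambda>(H, a). Dbox H a) ps)) (add_mset (Dbox G \<beta>) \<Omega>)"
| D_D: "L = LKD \<Longrightarrow> derivc L \<Gamma> {#} \<Longrightarrow> \<Gamma> \<noteq> {#} \<Longrightarrow>
     (\<forall>\<phi> \<in># \<Sigma>. sigmaD a \<phi>) \<Longrightarrow> (\<forall>\<phi> \<in># \<Omega>. omega_ok \<phi>) \<Longrightarrow>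
     wf_seq (\<Sigma> + image_mset (Dbox {a}) \<Gamma>) \<Omega> \<Longrightarrow>
     derivc L (\<Sigma> + image_mset (Dbox {a}) \<Gamma>) \<Omega>"
| D_T: "L = LKT \<Longrightarrow> derivc L (add_mset (Dbox G a) (add_mset a \<Gamma>)) \<Delta> \<Longrightarrow>
     derivc L (add_mset (Dbox G a) \<Gamma>) \<Delta>"
| cut: "derivc L \<Gamma> (add_mset C \<Delta>) \<Longrightarrow> derivc L (add_mset C \<Gamma>') \<Delta>' \<Longrightarrow>
     derivc L (\<Gamma> + \<Gamma>') (\<Delta> + \<Delta>')"

record ('w, 'ag, 'p) model =
  W :: "'w set"
  R :: "'ag set \<Rightarrow> ('w \<times> 'w) set"
  V :: "'p \<Rightarrow> 'w set"

definition is_model :: "('w, 'ag, 'p) model \<Rightarrow> bool" where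
  "is_model M = ((\<forall>G. G \<noteq> {} \<longrightarrow> R M G \<subseteq> W M \<times> W M) \<and> (\<forall>p. V M p \<subseteq> W M) \<and>
     (\<forall>G H. G \<noteq> {} \<longrightarrow> H \<noteq> {} \<longrightarrow> G \<subseteq> H \<longrightarrow> R M H \<subseteq> R M G))"

fun sat :: "('w, 'ag, 'p) model \<Rightarrow> 'w \<Rightarrow> ('ag, 'p) fm \<Rightarrow> bool" where
  "sat M w (Atom p) = (w \<in> V M p)"
| "sat M w Bot = False"
| "sat M w (And a b) = (sat M w a \<and> sat M w b)"
| "sat M w (Or a b) = (sat M w a \<or> sat M w b)"
| "sat M w (Imp a b) = (sat M w a \<longrightarrow> sat M w b)"
| "sat M w (Neg a) = (\<not> sat M w a)"
| "sat M w (Dbox G a) = (\<forall>v. (w, v) \<in> R M G \<longrightarrow> sat M v a)"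

definition serial_model :: "('w, 'ag, 'p) model \<Rightarrow> bool" where
  "serial_model M = (\<forall>a. \<forall>w \<in> W M. \<exists>v. (w, v) \<in> R M {a})"

definition reflexive_model :: "('w, 'ag, 'p) model \<Rightarrow> bool" where
  "reflexive_model M = (\<forall>G. G \<noteq> {} \<longrightarrow> (\<forall>w \<in> W M. (w, w) \<in> R M G))"

definition valid_in :: "(('w, 'ag, 'p) model \<Rightarrow> bool) \<Rightarrow> ('ag, 'p) fm multiset \<Rightarrow> ('ag, 'p) fm multiset \<Rightarrow> bool" where
  "valid_in C \<Gamma> \<Delta> = (\<forall>M. is_model M \<longrightarrow> C M \<longrightarrow>
     (\<forall>w \<in> W M. (\<forall>\<phi> \<in># \<Gamma>. sat M w \<phi>) \<longrightarrow> (\<exists>\<psi> \<in># \<Delta>. sat M w \<psi>)))"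

end

theory Submission
  imports Defs
begin

(* Soundness is proved world by world, by induction on the derivation: every rule
   preserves "if all antecedents hold at w then some succedent holds at w".
   For (D_K), a successor of w along R_G is also one along each R_{G_i}, because
   G_i \<subseteq> G and R is antitone in the group; for (D_D), seriality supplies an
   R_{a}-successor at which all of \<Gamma> holds, contradicting the premise \<Gamma> \<Rightarrow> ;
   (D_T) is reflexivity. The frame conditions only speak about nonempty groups,
   which is why well-formedness of derivable sequents is needed. *)

fun model_class :: "logic \<Rightarrow> ('w, 'ag, 'p) model \<Rightarrow> bool" where
  "model_class LK = (\<lambda>M. True)"
| "model_class LKD = serial_model"
| "model_class LKT = reflexive_model"

lemma derivc_wf_seq: "derivc L \<Gamma> \<Delta> \<Longrightarrow> wf_seq \<Gamma> \<Delta>"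
  by (induction rule: derivc.induct) (auto simp: wf_seq_def)

lemma is_model_R_in_W:
  assumes "is_model M" "G \<noteq> {}" "(w, v) \<in> R M G"
  shows "v \<in> W M"
proof -
  have "R M G \<subseteq> W M \<times> W M" using assms(1,2) unfolding is_model_def by blast
  with assms(3) show ?thesis by blast
qed

lemma is_model_R_antimono:
  assumes "is_model M" "H \<noteq> {}" "H \<subseteq> G" "(w, v) \<in> R M G"
  shows "(w, v) \<in> R M H"
proof -
  have "G \<noteq> {}" using assms(2,3) by blast
  then have "R M G \<subseteq> R M H" using assms(1-3) unfolding is_model_def by blast
  with assms(4) show ?thesis by blast
qed

lemma derivc_sound_at_world:
  assumes "derivc L \<Gamma> \<Delta>" "is_model M" "model_class L M"
  shows "w \<in> W M \<Longrightarrow> \<forall>\<phi> \<in># \<Gamma>. sat M w \<phi> \<Longrightarrow> \<exists>\<psi> \<in># \<Delta>. sat M w \<psi>"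
  using assms(1)
proof (induction arbitrary: w rule: derivc.induct)
  case (D_K ps \<beta> G \<Sigma> \<Omega>)
  have "G \<noteq> {}" using D_K.hyps(5) by (simp add: wf_seq_def)
  have "sat M v \<beta>" if wv: "(w, v) \<in> R M G" for v
  proof -
    have "v \<in> W M" using is_model_R_in_W[OF assms(2) \<open>G \<noteq> {}\<close> wv] .
    moreover have "\<forall>\<phi> \<in># mset (map snd ps). sat M v \<phi>"
    proof
      fix \<phi> assume "\<phi> \<in># mset (map snd ps)"
      then obtain H where H\<phi>: "(H, \<phi>) \<in> set ps" by auto
      have "H \<noteq> {}" using H\<phi> D_K.hyps(5) by (force simp: wf_seq_def)
      moreover have "H \<subseteq> G" using H\<phi> D_K.hyps(2) by auto
      ultimately have "(w, v) \<in> R M H" by (rule is_model_R_antimono[OF assms(2) _ _ wv])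
      moreover have "sat M w (Dbox H \<phi>)" using H\<phi> D_K.prems(2) by force
      ultimately show "sat M v \<phi>" by simp
    qed
    ultimately show ?thesis using D_K.IH by simp
  qed
  then show ?case by simp
next
  case (D_D \<Gamma> \<Sigma> a \<Omega>)
  have "serial_model M" using assms(3) D_D.hyps(1) by simp
  then obtain v where wv: "(w, v) \<in> R M {a}"
    using D_D.prems(1) unfolding serial_model_def by blast
  have "v \<in> W M" using is_model_R_in_W[OF assms(2) _ wv] by simp
  moreover have "\<forall>\<phi> \<in># \<Gamma>. sat M v \<phi>"
  proof
    fix \<phi> assume "\<phi> \<in># \<Gamma>"
    then have "Dbox {a} \<phi> \<in># \<Sigma> + image_mset (Dbox {a}) \<Gamma>" by simp
    then have "sat M w (Dbox {a} \<phi>)" using D_D.prems(2) by blast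
    then show "sat M v \<phi>" using wv by simp
  qed
  ultimately have "\<exists>\<psi> \<in># {#}. sat M v \<psi>" by (rule D_D.IH)
  then show ?case by simp
next
  case (D_T G a \<Gamma> \<Delta>)
  have "G \<noteq> {}" using derivc_wf_seq[OF D_T.hyps(2)] by (simp add: wf_seq_def)
  moreover have "reflexive_model M" using assms(3) D_T.hyps(1) by simp
  ultimately have "(w, w) \<in> R M G" using D_T.prems(1) unfolding reflexive_model_def by blast
  then have "sat M w a" using D_T.prems(2) by simp
  then show ?case using D_T.IH[OF D_T.prems(1)] D_T.prems(2) by simp
next
  case (cut \<Gamma> C \<Delta> \<Gamma>' \<Delta>')
  show ?case
  proof (cases "sat M w C")
    case True
    then have "\<exists>\<psi> \<in># \<Delta>'. sat M w \<psi>" using cut.IH(2)[OF cut.prems(1)] cut.prems(2) by simp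
    then show ?thesis by auto
  next
    case False
    have "\<exists>\<psi> \<in># add_mset C \<Delta>. sat M w \<psi>" using cut.IH(1)[OF cut.prems(1)] cut.prems(2) by simp
    with False show ?thesis by auto
  qed
qed auto

lemma derivc_valid_in:
  fixes \<Gamma> \<Delta> :: "('ag::finite, 'p::countable) fm multiset"
  assumes "derivc L \<Gamma> \<Delta>"
  shows "valid_in (model_class L :: ('w, 'ag, 'p) model \<Rightarrow> bool) \<Gamma> \<Delta>"
  unfolding valid_in_def
proof (intro allI impI ballI)
  fix M :: "('w, 'ag, 'p) model" and w
  assume "is_model M" "model_class L M" "w \<in> W M" "\<forall>\<phi> \<in># \<Gamma>. sat M w \<phi>"
  then show "\<exists>\<psi> \<in># \<Delta>. sat M w \<psi>" by (rule derivc_sound_at_world[OF assms])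
qed

theorem theorem4p1:
  fixes \<Gamma> \<Delta> :: "('ag::finite, 'p::countable) fm multiset"
  shows "(derivc LK \<Gamma> \<Delta> \<longrightarrow> valid_in (\<lambda>M::('w, 'ag, 'p) model. True) \<Gamma> \<Delta>) \<and>
         (derivc LKD \<Gamma> \<Delta> \<longrightarrow> valid_in (serial_model :: ('w, 'ag, 'p) model \<Rightarrow> bool) \<Gamma> \<Delta>) \<and>
         (derivc LKT \<Gamma> \<Delta> \<longrightarrow> valid_in (reflexive_model :: ('w, 'ag, 'p) model \<Rightarrow> bool) \<Gamma> \<Delta>)"
  using derivc_valid_in[where 'w = 'w, of LK \<Gamma> \<Delta>] derivc_valid_in[where 'w = 'w, of LKD \<Gamma> \<Delta>]
    derivc_valid_in[where 'w = 'w, of LKT \<Gamma> \<Delta>]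
  by simp

end
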